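(* Let $n\ge 1$ and $1\le k\le d$ be integers, set $p=k/d$, and let $\mathbf{x}_1,\dots,\mathbf{x}_n\in\mathbb{R}^d$ with $\mathbf{x}_i=(x_{i1},\dots,x_{id})$. Each node $i$ independently chooses a uniformly random subset $S_i\subseteq\{1,\dots,d\}$ of size $k$, and sets $h_{ij}=x_{ij}$ if $j\in S_i$ and $h_{ij}=0$ otherwise. For each coordinate $j$ let $M_j=|\{i: j\in S_i\}|$. Let $T:\{1,\dots,n\}\to\mathbb{R}\setminus\{0\}$ be any function such that $$\bar\beta=\Big(\sum_{m=1}^{n}\frac{k}{d\,T(m)}\binom{n-1}{m-1}p^{m-1}(1-p)^{n-m}\Big)^{-1}$$ is well defined (i.e. the sum is nonzero). Define the Rand-$k$-Spatial estimate of coordinate $j$ by $\hat{x}_j=\frac{1}{n}\frac{\bar\beta}{T(M_j)}\sum_{i=1}^n h_{ij}$ if $M_j\ge 1$ and $\hat{x}_j=0$ if $M_j=0$. Then for every $j$, $\mathbb{E}[\hat{x}_j]=\frac{1}{n}\sum_{i=1}^n x_{ij}$, where the expectation is over the random subsets $S_1,\dots,S_n$.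
   Context: This is the Rand-$k$-Spatial family of estimators for distributed sparsified mean estimation: the server receives only the sparsified vectors $\mathbf{h}_i=(h_{i1},\dots,h_{id})$ (with positions) and estimates the mean $\bar{\mathbf{x}}=\frac1n\sum_i\mathbf{x}_i$. The weights $\binom{n-1}{m-1}p^{m-1}(1-p)^{n-m}$ are the probabilities that $M_j=m$ conditional on a fixed node having sent coordinate $j$. *)

theory Defs
  imports "HOL-Probability.Probability"
begin

text \<open>Nodes are indexed by 1..n, coordinates by 1..d. A vector family is
  x :: nat => nat => real, with x i j the j-th coordinate of node i.\<close>

definition k_subsets :: "nat \<Rightarrow> nat \<Rightarrow> nat set set" where
  "k_subsets d k = {S. S \<subseteq> {1..d} \<and> card S = k}"

definition subset_choice_pmf :: "nat \<Rightarrow> nat \<Rightarrow> nat \<Rightarrow> (nat \<Rightarrow> nat set) pmf" where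
  "subset_choice_pmf n d k = Pi_pmf {1..n} {} (\<lambda>_. pmf_of_set (k_subsets d k))"

definition sparsified :: "(nat \<Rightarrow> nat \<Rightarrow> real) \<Rightarrow> (nat \<Rightarrow> nat set) \<Rightarrow> nat \<Rightarrow> nat \<Rightarrow> real" where
  "sparsified x S i j = (if j \<in> S i then x i j else 0)"

definition count_M :: "nat \<Rightarrow> (nat \<Rightarrow> nat set) \<Rightarrow> nat \<Rightarrow> nat" where
  "count_M n S j = card {i \<in> {1..n}. j \<in> S i}"

definition beta_sum :: "nat \<Rightarrow> nat \<Rightarrow> nat \<Rightarrow> (nat \<Rightarrow> real) \<Rightarrow> real" where
  "beta_sum n d k T = (let p = real k / real d in
     (\<Sum>m=1..n. real k / (real d * T m) * real ((n - 1) choose (m - 1))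
                 * p ^ (m - 1) * (1 - p) ^ (n - m)))"

definition beta_bar :: "nat \<Rightarrow> nat \<Rightarrow> nat \<Rightarrow> (nat \<Rightarrow> real) \<Rightarrow> real" where
  "beta_bar n d k T = inverse (beta_sum n d k T)"

definition rand_k_spatial_est ::
  "nat \<Rightarrow> nat \<Rightarrow> nat \<Rightarrow> (nat \<Rightarrow> real) \<Rightarrow> (nat \<Rightarrow> nat \<Rightarrow> real) \<Rightarrow> (nat \<Rightarrow> nat set) \<Rightarrow> nat \<Rightarrow> real" where
  "rand_k_spatial_est n d k T x S j =
     (if count_M n S j \<ge> 1
      then (1 / real n) * (beta_bar n d k T / T (count_M n S j)) * (\<Sum>i=1..n. sparsified x S i j)
      else 0)"

end

theory Submission
  imports Defs
begin

text \<open>The estimate of coordinate \<open>j\<close> depends on the random subsets only through the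
  membership pattern \<open>b i = (j \<in> S i)\<close>, whose entries are independent Bernoulli(\<open>p\<close>)
  variables with \<open>p = k/d\<close>. By linearity it suffices to show
  \<open>E[b i / T(M\<^sub>j)] = beta_sum\<close> for every node \<open>i\<close>: given \<open>b i\<close>, the count \<open>M\<^sub>j - 1\<close> of
  the other nodes is Binomial(\<open>n - 1\<close>, \<open>p\<close>), and averaging \<open>1 / T\<close> against this law is
  exactly the sum defining \<open>beta_sum\<close>.\<close>

lemma of_nat_divide_mem_unit_interval: "k \<le> d \<Longrightarrow> real k / real d \<in> {0..1}"
  by (auto simp: divide_le_eq_1)

lemma card_subsets_containing:
  assumes "finite A" "a \<in> A"
  shows "card {S. S \<subseteq> A \<and> card S = Suc k \<and> a \<in> S} = (card A - 1) choose k"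
proof -
  let ?R = "{R. R \<subseteq> A - {a} \<and> card R = k}"
  have "{S. S \<subseteq> A \<and> card S = Suc k \<and> a \<in> S} = insert a ` ?R"
  proof (intro equalityI subsetI)
    fix S assume S: "S \<in> {S. S \<subseteq> A \<and> card S = Suc k \<and> a \<in> S}"
    then have "finite S" using assms(1) finite_subset by blast
    with S have "S = insert a (S - {a})" "S - {a} \<in> ?R" by auto
    then show "S \<in> insert a ` ?R" by blast
  next
    fix S assume "S \<in> insert a ` ?R"
    then obtain R where R: "R \<in> ?R" "S = insert a R" by blast
    then have "finite R" "a \<notin> R" using assms(1) finite_subset by auto
    with R assms show "S \<in> {S. S \<subseteq> A \<and> card S = Suc k \<and> a \<in> S}" by auto
  qed
  moreover have "inj_on (insert a) ?R"
  proof (rule inj_onI)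
    fix R R' assume "R \<in> ?R" "R' \<in> ?R" "insert a R = insert a R'"
    then show "R = R'" by (auto simp: insert_ident)
  qed
  ultimately show ?thesis
    using assms by (simp add: card_image n_subsets)
qed

lemma map_pmf_mem_pmf_of_set_subsets:
  assumes "finite A" "a \<in> A" "k \<le> card A"
  shows "map_pmf (\<lambda>S. a \<in> S) (pmf_of_set {S. S \<subseteq> A \<and> card S = k})
           = bernoulli_pmf (real k / real (card A))"
proof -
  let ?K = "{S. S \<subseteq> A \<and> card S = k}"
  have card_K: "card ?K = card A choose k" using assms(1) by (rule n_subsets)
  have "finite ?K" using assms(1) by simp
  moreover have "?K \<noteq> {}" using card_K assms(3) by (intro notI) simp
  ultimately have "pmf (map_pmf (\<lambda>S. a \<in> S) (pmf_of_set ?K)) True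
      = real (card {S. S \<subseteq> A \<and> card S = k \<and> a \<in> S}) / real (card A choose k)"
    by (simp add: pmf_map measure_pmf_of_set card_K vimage_def Int_def conj_commute conj_left_commute)
  also have "\<dots> = real k / real (card A)"
  proof (cases k)
    case (Suc k')
    have "card A * ((card A - 1) choose k') = k * (card A choose k)"
      using binomial_absorption[of k' "card A"] Suc by simp
    then have "real (card A) * real ((card A - 1) choose k') = real k * real (card A choose k)"
      by (metis of_nat_mult)
    moreover have "card A > 0" "card A choose k > 0"
      using assms card_gt_0_iff by auto
    ultimately show ?thesis
      using Suc card_subsets_containing[OF assms(1,2)] by (simp add: field_simps)
  next
    case 0
    have "{S. S \<subseteq> A \<and> card S = 0 \<and> a \<in> S} = {}"
      using assms(1) by (auto dest: finite_subset)
    then show ?thesis using 0 by (simp only: card.empty of_nat_0 div_0)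
  qed
  finally have pmf_True: "pmf (map_pmf (\<lambda>S. a \<in> S) (pmf_of_set ?K)) True = real k / real (card A)" .
  show ?thesis
  proof (rule pmf_eqI)
    fix b :: bool
    show "pmf (map_pmf (\<lambda>S. a \<in> S) (pmf_of_set ?K)) b = pmf (bernoulli_pmf (real k / real (card A))) b"
      using of_nat_divide_mem_unit_interval[OF assms(3)] pmf_True
      by (cases b) (simp_all add: pmf_False_conv_True[of "map_pmf _ _"])
  qed
qed

lemma map_pmf_subset_choice_mem:
  assumes "k \<le> d" "j \<in> {1..d}"
  shows "map_pmf (\<lambda>S i. j \<in> S i) (subset_choice_pmf n d k)
           = Pi_pmf {1..n} False (\<lambda>_. bernoulli_pmf (real k / real d))"
proof -
  have "map_pmf (\<lambda>S. j \<in> S) (pmf_of_set (k_subsets d k)) = bernoulli_pmf (real k / real d)"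
    using map_pmf_mem_pmf_of_set_subsets[of "{1..d}" j k] assms by (simp add: k_subsets_def)
  then have "Pi_pmf {1..n} False (\<lambda>_. bernoulli_pmf (real k / real d))
      = Pi_pmf {1..n} False (\<lambda>_. map_pmf (\<lambda>S. j \<in> S) (pmf_of_set (k_subsets d k)))"
    by (simp only:)
  also have "\<dots> = map_pmf (\<lambda>S. (\<lambda>S. j \<in> S) \<circ> S) (subset_choice_pmf n d k)"
    unfolding subset_choice_pmf_def by (rule Pi_pmf_map) auto
  finally show ?thesis by (simp only: comp_def)
qed

lemma expectation_Pi_bernoulli_indicator_count:
  fixes f :: "nat \<Rightarrow> real"
  assumes "finite A" "i \<in> A" "p \<in> {0..1}"
  shows "measure_pmf.expectation (Pi_pmf A False (\<lambda>_. bernoulli_pmf p))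
           (\<lambda>b. if b i then f (card {l \<in> A. b l}) else 0)
       = p * measure_pmf.expectation (binomial_pmf (card A - 1) p) (\<lambda>m. f (Suc m))"
proof -
  define A' where "A' = A - {i}"
  have A: "A = insert i A'" "i \<notin> A'" "finite A'" "card A' = card A - 1"
    using assms(1,2) by (auto simp: A'_def)
  let ?Q = "Pi_pmf A' False (\<lambda>_. bernoulli_pmf p)"
  define g where "g b = (if b i then f (card {l \<in> A. b l}) else 0)" for b :: "'a \<Rightarrow> bool"
  have "Pi_pmf A False (\<lambda>_. bernoulli_pmf p) = bernoulli_pmf p \<bind> (\<lambda>y. map_pmf (\<lambda>b. b(i := y)) ?Q)"
    unfolding A(1) by (subst Pi_pmf_insert'[OF A(3,2)]) (simp add: map_pmf_def)
  moreover have "finite (set_pmf ?Q)"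
    using A(3) by (simp add: set_Pi_pmf finite_PiE_dflt)
  ultimately have "measure_pmf.expectation (Pi_pmf A False (\<lambda>_. bernoulli_pmf p)) g
      = (\<Sum>y\<in>UNIV. pmf (bernoulli_pmf p) y *\<^sub>R measure_pmf.expectation (map_pmf (\<lambda>b. b(i := y)) ?Q) g)"
    by (simp only:) (rule pmf_expectation_bind; simp)
  also have "\<dots> = p * measure_pmf.expectation ?Q (\<lambda>b. g (b(i := True)))"
    using assms(3) by (simp add: UNIV_bool g_def)
  also have "(\<lambda>b. g (b(i := True))) = (\<lambda>b. f (Suc (card {l \<in> A'. b l})))"
  proof
    fix b :: "'a \<Rightarrow> bool"
    have "{l \<in> A. (b(i := True)) l} = insert i {l \<in> A'. b l}"
      using A(1,2) by auto
    then show "g (b(i := True)) = f (Suc (card {l \<in> A'. b l}))"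
      using A(2,3) by (simp add: g_def)
  qed
  also have "measure_pmf.expectation ?Q (\<lambda>b. f (Suc (card {l \<in> A'. b l})))
      = measure_pmf.expectation (map_pmf (\<lambda>b. card {l \<in> A'. b l}) ?Q) (\<lambda>m. f (Suc m))"
    by simp
  also have "map_pmf (\<lambda>b. card {l \<in> A'. b l}) ?Q = binomial_pmf (card A - 1) p"
    using binomial_pmf_altdef'[OF A(3,4) assms(3)] by simp
  finally show ?thesis
    unfolding g_def .
qed

lemma beta_sum_eq_expectation_binomial:
  assumes "n \<ge> 1" "k \<le> d"
  shows "beta_sum n d k T
    = real k / real d * measure_pmf.expectation (binomial_pmf (n - 1) (real k / real d)) (\<lambda>m. 1 / T (Suc m))"
proof -
  let ?p = "real k / real d"
  have "beta_sum n d k T = (\<Sum>m<n. ?p * (real ((n - 1) choose m) * ?p ^ m * (1 - ?p) ^ (n - 1 - m) * (1 / T (Suc m))))"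
    unfolding beta_sum_def Let_def One_nat_def sum.atLeast1_atMost_eq
    by (intro sum.cong) (auto simp: field_simps)
  also have "\<dots> = ?p * measure_pmf.expectation (binomial_pmf (n - 1) ?p) (\<lambda>m. 1 / T (Suc m))"
    using assms(1) of_nat_divide_mem_unit_interval[OF assms(2)]
    by (simp add: expectation_binomial_pmf' sum_distrib_left lessThan_Suc_atMost[symmetric])
  finally show ?thesis .
qed

lemma rand_k_spatial_est_eq_sum:
  "rand_k_spatial_est n d k T x S j
     = beta_bar n d k T / real n * (\<Sum>i=1..n. x i j * (if j \<in> S i then 1 / T (count_M n S j) else 0))"
proof (cases "count_M n S j \<ge> 1")
  case True
  then show ?thesis
    unfolding rand_k_spatial_est_def sparsified_def sum_distrib_left
    by (auto intro!: sum.cong)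
next
  case False
  then have "card {i \<in> {1..n}. j \<in> S i} = 0"
    unfolding count_M_def by linarith
  then have "{i \<in> {1..n}. j \<in> S i} = {}"
    by simp
  with False show ?thesis
    by (simp add: rand_k_spatial_est_def)
qed

theorem lemma2:
  fixes n d k j :: nat and T :: "nat \<Rightarrow> real" and x :: "nat \<Rightarrow> nat \<Rightarrow> real"
  assumes "n \<ge> 1" and "1 \<le> k" and "k \<le> d"
    and "\<forall>m\<in>{1..n}. T m \<noteq> 0"
    and "beta_sum n d k T \<noteq> 0"
    and "j \<in> {1..d}"
  shows "measure_pmf.expectation (subset_choice_pmf n d k) (\<lambda>S. rand_k_spatial_est n d k T x S j)
         = (1 / real n) * (\<Sum>i=1..n. x i j)"
proof -
  let ?p = "real k / real d"
  let ?B = "Pi_pmf {1..n} False (\<lambda>_. bernoulli_pmf ?p)"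
  define weight where "weight = (\<lambda>i (b :: nat \<Rightarrow> bool). if b i then 1 / T (card {l \<in> {1..n}. b l}) else 0)"
  have "rand_k_spatial_est n d k T x S j
      = beta_bar n d k T / real n * (\<Sum>i=1..n. x i j * weight i (\<lambda>i. j \<in> S i))" for S
    unfolding rand_k_spatial_est_eq_sum weight_def count_M_def by simp
  then have "measure_pmf.expectation (subset_choice_pmf n d k) (\<lambda>S. rand_k_spatial_est n d k T x S j)
      = measure_pmf.expectation ?B (\<lambda>b. beta_bar n d k T / real n * (\<Sum>i=1..n. x i j * weight i b))"
    using map_pmf_subset_choice_mem[OF assms(3,6), of n, symmetric] by simp
  also have "\<dots> = beta_bar n d k T / real n * (\<Sum>i=1..n. x i j * measure_pmf.expectation ?B (weight i))"
    by (simp add: integrable_measure_pmf_finite set_Pi_pmf finite_PiE_dflt)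
  also have "\<dots> = beta_bar n d k T / real n * (\<Sum>i=1..n. x i j * beta_sum n d k T)"
  proof -
    have "measure_pmf.expectation ?B (weight i) = beta_sum n d k T" if "i \<in> {1..n}" for i
      using expectation_Pi_bernoulli_indicator_count[of "{1..n}" i ?p "\<lambda>m. 1 / T m"] that
        of_nat_divide_mem_unit_interval[OF assms(3)]
        beta_sum_eq_expectation_binomial[OF assms(1,3)]
      by (simp add: weight_def)
    then show ?thesis by simp
  qed
  also have "\<dots> = (1 / real n) * (\<Sum>i=1..n. x i j)"
    using assms(5) by (simp add: beta_bar_def sum_distrib_right[symmetric])
  finally show ?thesis .
qed

end
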